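(* Let $D$ be a division ring with center $F$ such that $D$ is algebraic over $F$. Let $V$ be a maximal subring of $F$ which is not a field, and let $x\in F\setminus V$. Suppose that $T=\{\alpha\in D: \alpha \text{ is integral over } V\}$ is a subring of $D$. Then $D$ has a maximal subring $W$ such that $T\subseteq W$, $x\notin W$ (in particular $x\notin T$), and $F\cap W=V$.
   Context: All rings are associative unital and subrings share the identity. A maximal subring of a ring $T$ is a proper subring maximal under inclusion among proper subrings of $T$. An element $\alpha\in D$ is integral over $V\subseteq F$ if it satisfies a monic polynomial with coefficients in $V$. *)

theory Defs
  imports Main
begin

definition is_subring :: "'a::ring_1 set \<Rightarrow> bool" where
  "is_subring S \<longleftrightarrow> 1 \<in> S \<and> (\<forall>a\<in>S. \<forall>b\<in>S. a - b \<in> S \<and> a * b \<in> S)"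

definition maximal_subring_of :: "'a::ring_1 set \<Rightarrow> 'a set \<Rightarrow> bool" where
  "maximal_subring_of S T \<longleftrightarrow> is_subring S \<and> S \<subset> T \<and>
     (\<forall>S'. is_subring S' \<and> S \<subseteq> S' \<and> S' \<subset> T \<longrightarrow> S' = S)"

definition center :: "'a::ring_1 set" where
  "center = {a. \<forall>b. a * b = b * a}"

definition algebraic_over :: "'a::ring_1 set \<Rightarrow> 'a \<Rightarrow> bool" where
  "algebraic_over F \<alpha> \<longleftrightarrow> (\<exists>n c. (\<forall>i\<le>n. c i \<in> F) \<and> (\<exists>i\<le>n. c i \<noteq> 0) \<and>
      (\<Sum>i\<le>n. c i * \<alpha> ^ i) = 0)"

definition integral_over :: "'a::ring_1 set \<Rightarrow> 'a \<Rightarrow> bool" where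
  "integral_over V \<alpha> \<longleftrightarrow> (\<exists>n c. (\<forall>i<n. c i \<in> V) \<and>
      \<alpha> ^ n + (\<Sum>i<n. c i * \<alpha> ^ i) = 0)"

definition is_subfield :: "'a::division_ring set \<Rightarrow> bool" where
  "is_subfield S \<longleftrightarrow> is_subring S \<and> (\<forall>a\<in>S. a \<noteq> 0 \<longrightarrow> inverse a \<in> S)"

end

theory Submission
  imports Defs
begin

(* Every subring of F strictly containing V is F. Applied to the elements of F
   with a denominator in V, which include inverse a for any non-unit a \<noteq> 0 of V, this
   makes F the fraction field of V. Hence a subring S of D containing T and x contains F
   (apply maximality to S \<inter> F), and then all of D: an \<alpha> \<in> D satisfies a monic equation
   over F, a common denominator d \<in> V of its coefficients makes d\<alpha> integral over V, and
   \<alpha> = inverse d * (d\<alpha>). Moreover x \<notin> T, as otherwise F \<subseteq> T and inverse a would be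
   integral over V, hence in V. Zorn's lemma yields a subring W \<supseteq> T maximal with x \<notin> W;
   by the above W is a maximal subring of D, and F \<inter> W = V by maximality of V. *)

lemma subring_one: "is_subring S \<Longrightarrow> 1 \<in> S"
  unfolding is_subring_def by blast

lemma subring_diff: "is_subring S \<Longrightarrow> a \<in> S \<Longrightarrow> b \<in> S \<Longrightarrow> a - b \<in> S"
  unfolding is_subring_def by blast

lemma subring_mult: "is_subring S \<Longrightarrow> a \<in> S \<Longrightarrow> b \<in> S \<Longrightarrow> a * b \<in> S"
  unfolding is_subring_def by blast

lemma subring_zero: "is_subring S \<Longrightarrow> 0 \<in> S"
  by (metis subring_one subring_diff diff_self)

lemma subring_uminus: "is_subring S \<Longrightarrow> a \<in> S \<Longrightarrow> - a \<in> S"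
  by (metis subring_zero subring_diff diff_0)

lemma subring_add: "is_subring S \<Longrightarrow> a \<in> S \<Longrightarrow> b \<in> S \<Longrightarrow> a + b \<in> S"
  by (metis subring_uminus subring_diff diff_minus_eq_add)

lemma subring_power: "is_subring S \<Longrightarrow> a \<in> S \<Longrightarrow> a ^ n \<in> S"
  by (induction n) (auto intro: subring_one subring_mult)

lemma subring_sum: "is_subring S \<Longrightarrow> (\<And>i. i \<in> A \<Longrightarrow> f i \<in> S) \<Longrightarrow> sum f A \<in> S"
  by (induction A rule: infinite_finite_induct) (auto intro: subring_zero subring_add)

lemma subring_Int: "is_subring S \<Longrightarrow> is_subring S' \<Longrightarrow> is_subring (S \<inter> S')"
  unfolding is_subring_def by blast

lemma maximal_subring_ofD: "maximal_subring_of V T \<Longrightarrow> is_subring V \<and> V \<subseteq> T"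
  unfolding maximal_subring_of_def by blast

lemma maximal_subring_of_eq:
  assumes "maximal_subring_of V T" "is_subring S" "V \<subseteq> S" "S \<subseteq> T" "y \<in> S" "y \<notin> V"
  shows "S = T"
  using assms unfolding maximal_subring_of_def by blast

lemma power_mult_commuting:
  fixes a b :: "'a::monoid_mult"
  assumes "a * b = b * a"
  shows "(a * b) ^ n = a ^ n * b ^ n"
proof (induction n)
  case (Suc n)
  have "(a * b) ^ Suc n = a * (b * a ^ n) * b ^ n"
    by (simp add: Suc mult.assoc)
  also have "\<dots> = a ^ Suc n * b ^ Suc n"
    by (simp add: power_commuting_commutes[OF assms, symmetric] mult.assoc)
  finally show ?case .
qed simp

lemma center_commute: "a \<in> center \<Longrightarrow> a * b = b * a"
  unfolding center_def by blast

lemma is_subring_center: "is_subring (center :: 'a::ring_1 set)"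
  unfolding is_subring_def center_def
proof (intro conjI ballI)
  fix a c :: 'a assume "a \<in> {a. \<forall>b. a * b = b * a}" "c \<in> {a. \<forall>b. a * b = b * a}"
  then have a: "\<And>b. a * b = b * a" and c: "\<And>b. c * b = b * c" by auto
  show "a - c \<in> {a. \<forall>b. a * b = b * a}"
    by (simp add: left_diff_distrib right_diff_distrib a c)
  show "a * c \<in> {a. \<forall>b. a * b = b * a}"
  proof (intro CollectI allI)
    fix b
    have "a * c * b = a * (b * c)" by (simp add: mult.assoc c)
    also have "\<dots> = (a * b) * c" by (rule mult.assoc[symmetric])
    also have "\<dots> = b * (a * c)" by (simp only: a[of b] mult.assoc)
    finally show "a * c * b = b * (a * c)" .
  qed
qed simp

lemma inverse_in_center:
  fixes a :: "'a::division_ring"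
  assumes "a \<in> center"
  shows "inverse a \<in> center"
proof (cases "a = 0")
  case False
  have "inverse a * b = b * inverse a" for b
  proof -
    have "inverse a * b = inverse a * (b * a) * inverse a"
      using False by (simp add: mult.assoc)
    also have "\<dots> = b * inverse a"
      using False by (simp add: center_commute[OF assms, symmetric] mult.assoc[symmetric])
    finally show ?thesis .
  qed
  then show ?thesis unfolding center_def by blast
qed (simp add: center_def)

lemma is_subfield_center: "is_subfield (center :: 'a::division_ring set)"
  unfolding is_subfield_def using is_subring_center inverse_in_center by blast

lemma integral_over_mem: "is_subring V \<Longrightarrow> v \<in> V \<Longrightarrow> integral_over V v"
  unfolding integral_over_def
  by (rule exI[of _ 1], rule exI[of _ "\<lambda>_. - v"]) (simp add: subring_uminus)

lemma integral_over_if_algebraic_over: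
  fixes \<alpha> :: "'a::division_ring"
  assumes K: "is_subfield K" and "algebraic_over K \<alpha>"
  shows "integral_over K \<alpha>"
proof -
  obtain n c where "\<forall>i\<le>n. c i \<in> K" "\<exists>i\<le>n. c i \<noteq> 0" "(\<Sum>i\<le>n. c i * \<alpha> ^ i) = 0"
    using \<open>algebraic_over K \<alpha>\<close> unfolding algebraic_over_def by blast
  then show ?thesis
  proof (induction n)
    case (Suc n)
    show ?case
    proof (cases "c (Suc n) = 0")
      case True
      then show ?thesis using Suc by (simp add: le_Suc_eq) blast
    next
      case False
      define g where "g = inverse (c (Suc n))"
      have "g * (\<Sum>i\<le>Suc n. c i * \<alpha> ^ i) = 0" using Suc.prems(3) by simp
      then have "\<alpha> ^ Suc n + (\<Sum>i<Suc n. (g * c i) * \<alpha> ^ i) = 0"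
        using False
        by (simp add: lessThan_Suc_atMost[symmetric] distrib_left sum_distrib_left
            g_def mult.assoc[symmetric] add.commute)
      moreover have "g \<in> K"
        using K Suc.prems(1) False unfolding g_def is_subfield_def by blast
      then have "g * c i \<in> K" if "i < Suc n" for i
        using K Suc.prems(1) that unfolding is_subfield_def by (auto intro: subring_mult)
      ultimately show ?thesis unfolding integral_over_def
        by (intro exI[of _ "Suc n"] exI[of _ "\<lambda>i. g * c i"]) blast
    qed
  qed simp
qed

(* Multiplying the monic equation of b = inverse a by a ^ (n - 1) expresses b as a
   polynomial in a with coefficients in V. *)
lemma inverse_mem_if_integral_over:
  fixes a :: "'a::division_ring"
  assumes V: "is_subring V" "V \<subseteq> center" and a: "a \<in> V" "a \<noteq> 0"
    and "integral_over V (inverse a)"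
  shows "inverse a \<in> V"
proof -
  let ?b = "inverse a"
  obtain n c where c: "\<forall>i<n. c i \<in> V" and eq: "?b ^ n + (\<Sum>i<n. c i * ?b ^ i) = 0"
    using \<open>integral_over V ?b\<close> unfolding integral_over_def by blast
  have ab: "a ^ i * ?b ^ i = 1" for i
    by (rule left_right_inverse_power) (simp add: a)
  show ?thesis
  proof (cases n)
    case 0
    then show ?thesis using eq by simp
  next
    case (Suc k)
    have "a ^ k * ?b ^ n = ?b"
      using Suc ab[of k] by (simp add: power_Suc2 mult.assoc[symmetric] del: power_Suc)
    moreover have "a ^ k * (c i * ?b ^ i) = c i * a ^ (k - i)" if "i < n" for i
    proof -
      have ci: "c i \<in> center" using c that V by blast
      have ak: "a ^ k = a ^ (k - i) * a ^ i" using that Suc by (simp add: power_add[symmetric])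
      have "a ^ k * (c i * ?b ^ i) = a ^ (k - i) * ((a ^ i * c i) * ?b ^ i)"
        by (simp only: ak mult.assoc)
      also have "\<dots> = a ^ (k - i) * (c i * (a ^ i * ?b ^ i))"
        by (simp only: center_commute[OF ci, of "a ^ i", symmetric] mult.assoc)
      also have "\<dots> = c i * a ^ (k - i)"
        using ab[of i] center_commute[OF ci, of "a ^ (k - i)"] by simp
      finally show ?thesis .
    qed
    moreover have "a ^ k * (?b ^ n + (\<Sum>i<n. c i * ?b ^ i)) = 0" using eq by simp
    ultimately have "?b + (\<Sum>i<n. c i * a ^ (k - i)) = 0"
      by (simp add: distrib_left sum_distrib_left)
    then have "?b = - (\<Sum>i<n. c i * a ^ (k - i))" by (simp add: eq_neg_iff_add_eq_0)
    moreover have "(\<Sum>i<n. c i * a ^ (k - i)) \<in> V"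
      using c a V by (auto intro!: subring_sum subring_mult subring_power)
    ultimately show ?thesis using subring_uminus[OF V(1)] by simp
  qed
qed

lemma monic_root_scale:
  fixes \<alpha> d :: "'a::ring_1"
  assumes d: "d \<in> center" and root: "\<alpha> ^ m + (\<Sum>i<m. e i * \<alpha> ^ i) = 0"
  shows "(d * \<alpha>) ^ m + (\<Sum>i<m. (d ^ (m - i) * e i) * (d * \<alpha>) ^ i) = 0"
proof -
  have scale: "(d * \<alpha>) ^ i = d ^ i * \<alpha> ^ i" for i
    by (rule power_mult_commuting) (rule center_commute[OF d])
  have "(d ^ (m - i) * e i) * (d * \<alpha>) ^ i = d ^ m * (e i * \<alpha> ^ i)" if "i < m" for i
  proof -
    have "d ^ i \<in> center" using d is_subring_center subring_power by blast
    then have "(d ^ (m - i) * e i) * (d * \<alpha>) ^ i = d ^ (m - i) * (d ^ i * (e i * \<alpha> ^ i))"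
      using center_commute[of "d ^ i" "e i"] by (simp add: scale mult.assoc[symmetric])
    also have "\<dots> = d ^ m * (e i * \<alpha> ^ i)"
      using that by (simp add: mult.assoc[symmetric] power_add[symmetric])
    finally show ?thesis .
  qed
  then have "(d * \<alpha>) ^ m + (\<Sum>i<m. (d ^ (m - i) * e i) * (d * \<alpha>) ^ i)
      = d ^ m * (\<alpha> ^ m + (\<Sum>i<m. e i * \<alpha> ^ i))"
    by (simp add: scale distrib_left sum_distrib_left)
  then show ?thesis using root by simp
qed

lemma integral_over_mult_common_denominator:
  fixes \<alpha> d :: "'a::ring_1"
  assumes V: "is_subring V" "V \<subseteq> center" and d: "d \<in> V"
    and root: "\<alpha> ^ m + (\<Sum>i<m. e i * \<alpha> ^ i) = 0" and de: "\<forall>i<m. d * e i \<in> V"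
  shows "integral_over V (d * \<alpha>)"
proof -
  have "d ^ (m - i) * e i \<in> V" if "i < m" for i
  proof -
    have "d ^ (m - i) * e i = d ^ (m - Suc i) * (d * e i)"
      using that by (simp add: Suc_diff_Suc[symmetric] power_Suc2 mult.assoc del: power_Suc)
    then show ?thesis using V d de that by (simp add: subring_mult subring_power)
  qed
  moreover have "d \<in> center" using d V by blast
  ultimately show ?thesis
    using monic_root_scale[OF _ root] unfolding integral_over_def
    by (intro exI[of _ m] exI[of _ "\<lambda>i. d ^ (m - i) * e i"]) blast
qed

definition fractions :: "'a::ring_1 set \<Rightarrow> 'a set" where
  "fractions V = {c \<in> center. \<exists>b\<in>V. b \<noteq> 0 \<and> b * c \<in> V}"

lemma common_denominator:
  fixes V :: "'a::division_ring set" and m :: nat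
  assumes V: "is_subring V" "V \<subseteq> center" and e: "\<forall>i<m. e i \<in> fractions V"
  shows "\<exists>d\<in>V. d \<noteq> 0 \<and> (\<forall>i<m. d * e i \<in> V)"
  using e
proof (induction m)
  case 0
  then show ?case using subring_one[OF V(1)] by (intro bexI[of _ 1]) auto
next
  case (Suc m)
  then obtain d where d: "d \<in> V" "d \<noteq> 0" "\<forall>i<m. d * e i \<in> V" by auto
  obtain b where b: "b \<in> V" "b \<noteq> 0" "b * e m \<in> V"
    using Suc.prems unfolding fractions_def by auto
  have "(b * d) * e i \<in> V" if "i < Suc m" for i
  proof (cases "i = m")
    case True
    have "d \<in> center" using d V by blast
    then have "b * d = d * b" by (rule center_commute[symmetric])
    then have "(b * d) * e m = d * (b * e m)" by (simp add: mult.assoc)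
    then show ?thesis using True d b subring_mult[OF V(1)] by simp
  next
    case False
    then show ?thesis using that d b subring_mult[OF V(1)] by (simp add: mult.assoc)
  qed
  moreover have "b * d \<in> V" "b * d \<noteq> 0" using b d subring_mult[OF V(1)] by auto
  ultimately show ?case by blast
qed

lemma is_subring_fractions:
  fixes V :: "'a::division_ring set"
  assumes V: "is_subring V" "V \<subseteq> center"
  shows "is_subring (fractions V)"
  unfolding is_subring_def
proof (intro conjI ballI)
  show "1 \<in> fractions V"
    unfolding fractions_def using subring_one[OF V(1)] subring_one[OF is_subring_center] by force
next
  fix c c' assume "c \<in> fractions V" "c' \<in> fractions V"
  then obtain b b' where b: "b \<in> V" "b \<noteq> 0" "b * c \<in> V" "b' \<in> V" "b' \<noteq> 0" "b' * c' \<in> V"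
    and cc: "c \<in> center" "c' \<in> center"
    unfolding fractions_def by auto
  have bb: "b * b' \<in> V" "b * b' \<noteq> 0" using b subring_mult[OF V(1)] by auto
  have "b * b' = b' * b" using center_commute[of b b'] b V by blast
  then have "(b * b') * c = b' * (b * c)" by (simp only: mult.assoc)
  then have "(b * b') * (c - c') = b' * (b * c) - b * (b' * c')"
    by (simp only: right_diff_distrib mult.assoc)
  also have "\<dots> \<in> V"
    using subring_diff[OF V(1) subring_mult[OF V(1) b(4) b(3)] subring_mult[OF V(1) b(1) b(6)]] .
  finally have diff: "(b * b') * (c - c') \<in> V" .
  have "(b * b') * (c * c') = b * ((c * b') * c')"
    using center_commute[OF cc(1), of b'] by (simp add: mult.assoc)
  also have "\<dots> = (b * c) * (b' * c')" by (simp add: mult.assoc)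
  also have "\<dots> \<in> V" using subring_mult[OF V(1) b(3) b(6)] .
  finally have mult: "(b * b') * (c * c') \<in> V" .
  show "c - c' \<in> fractions V"
    unfolding fractions_def using bb diff subring_diff[OF is_subring_center cc] by blast
  show "c * c' \<in> fractions V"
    unfolding fractions_def using bb mult subring_mult[OF is_subring_center cc] by blast
qed

lemma fractions_eq_center:
  fixes V :: "'a::division_ring set"
  assumes maxV: "maximal_subring_of V center" and "\<not> is_subfield V"
  shows "fractions V = center"
proof -
  have V: "is_subring V" "V \<subseteq> center" using maximal_subring_ofD[OF maxV] by auto
  obtain a where a: "a \<in> V" "a \<noteq> 0" "inverse a \<notin> V"
    using assms(2) V(1) unfolding is_subfield_def by blast
  have "inverse a \<in> fractions V"
    unfolding fractions_def using a V inverse_in_center subring_one[OF V(1)]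
    by (auto intro!: bexI[of _ a])
  moreover have "V \<subseteq> fractions V"
    unfolding fractions_def using V subring_one[OF V(1)] by force
  ultimately show ?thesis
    using maximal_subring_of_eq[OF maxV is_subring_fractions[OF V]] a(3)
    unfolding fractions_def by blast
qed

lemma subring_eq_UNIV_if_algebraic:
  fixes S V :: "'a::division_ring set"
  assumes alg: "\<forall>\<alpha>::'a. algebraic_over center \<alpha>" and V: "is_subring V" "V \<subseteq> center"
    and frac: "fractions V = center"
    and S: "is_subring S" "center \<subseteq> S" "{\<alpha>. integral_over V \<alpha>} \<subseteq> S"
  shows "S = UNIV"
proof -
  have "\<alpha> \<in> S" for \<alpha>
  proof -
    have "integral_over center \<alpha>"
      using integral_over_if_algebraic_over[OF is_subfield_center alg[rule_format]] .
    then obtain m e where e: "\<forall>i<m. e i \<in> center"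
      and root: "\<alpha> ^ m + (\<Sum>i<m. e i * \<alpha> ^ i) = 0"
      unfolding integral_over_def by blast
    from e have "\<forall>i<m. e i \<in> fractions V" by (simp add: frac)
    then obtain d where d: "d \<in> V" "d \<noteq> 0" "\<forall>i<m. d * e i \<in> V"
      using common_denominator[OF V] by blast
    have "d * \<alpha> \<in> S"
      using integral_over_mult_common_denominator[OF V d(1) root d(3)] S(3) by blast
    moreover have "inverse d \<in> S" using d V S(2) inverse_in_center by blast
    ultimately have "inverse d * (d * \<alpha>) \<in> S" using subring_mult[OF S(1)] by blast
    then show "\<alpha> \<in> S" using d(2) by (simp add: mult.assoc[symmetric])
  qed
  then show ?thesis by blast
qed

lemma center_subset_subring:
  assumes maxV: "maximal_subring_of V center"
    and S: "is_subring S" "V \<subseteq> S" and x: "x \<in> S" "x \<in> center" "x \<notin> V"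
  shows "center \<subseteq> S"
proof -
  have "S \<inter> center = center"
    using maximal_subring_of_eq[OF maxV subring_Int[OF S(1) is_subring_center], of x]
      S(2) x maximal_subring_ofD[OF maxV] by blast
  then show ?thesis by blast
qed

lemma is_subring_Union_chain:
  assumes "C \<noteq> {}" "\<And>S. S \<in> C \<Longrightarrow> is_subring S" "chain\<^sub>\<subseteq> C"
  shows "is_subring (\<Union>C)"
  unfolding is_subring_def
proof (intro conjI ballI)
  show "1 \<in> \<Union>C" using assms(1,2) subring_one by blast
next
  fix p q assume "p \<in> \<Union>C" "q \<in> \<Union>C"
  then obtain Z where "Z \<in> C" "p \<in> Z" "q \<in> Z"
    using assms(3) unfolding chain_subset_def by blast
  then show "p - q \<in> \<Union>C" "p * q \<in> \<Union>C"
    using assms(2) subring_diff subring_mult by blast+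
qed

lemma exists_maximal_subring_avoiding:
  assumes T: "is_subring T" "x \<notin> T"
    and full: "\<And>S. is_subring S \<Longrightarrow> T \<subseteq> S \<Longrightarrow> x \<in> S \<Longrightarrow> S = UNIV"
  shows "\<exists>W. maximal_subring_of W UNIV \<and> T \<subseteq> W \<and> x \<notin> W"
proof -
  define A where "A = {S. is_subring S \<and> T \<subseteq> S \<and> x \<notin> S}"
  have "\<exists>W\<in>A. \<forall>S\<in>A. W \<subseteq> S \<longrightarrow> S = W"
  proof (rule subset_Zorn_nonempty)
    show "A \<noteq> {}" using T unfolding A_def by blast
  next
    fix C assume "C \<noteq> {}" "subset.chain A C"
    then have "C \<subseteq> A" "chain\<^sub>\<subseteq> C"
      by (auto simp: subset_chain_def chain_subset_def)
    then have "is_subring (\<Union>C)"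
      using \<open>C \<noteq> {}\<close> by (intro is_subring_Union_chain) (auto simp: A_def)
    then show "\<Union>C \<in> A"
      using \<open>C \<noteq> {}\<close> \<open>C \<subseteq> A\<close> unfolding A_def by blast
  qed
  then obtain W where W: "is_subring W" "T \<subseteq> W" "x \<notin> W"
    and max: "\<And>S. is_subring S \<Longrightarrow> W \<subseteq> S \<Longrightarrow> x \<notin> S \<Longrightarrow> S = W"
    unfolding A_def by auto
  have "maximal_subring_of W UNIV"
    unfolding maximal_subring_of_def
  proof (intro conjI allI impI)
    fix S assume S: "is_subring S \<and> W \<subseteq> S \<and> S \<subset> UNIV"
    then have "x \<notin> S" using full[of S] W(2) by blast
    then show "S = W" using S max by blast
  qed (use W in auto)
  then show ?thesis using W by blast
qed

theorem proposition3p1: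
  fixes V :: "'a::division_ring set" and x :: 'a
  assumes alg: "\<forall>\<alpha>::'a. algebraic_over center \<alpha>"
    and maxV: "maximal_subring_of V center"
    and notfield: "\<not> is_subfield V"
    and x: "x \<in> center" "x \<notin> V"
    and T: "is_subring {\<alpha>::'a. integral_over V \<alpha>}"
  shows "\<exists>W. maximal_subring_of W (UNIV :: 'a set) \<and>
           {\<alpha>. integral_over V \<alpha>} \<subseteq> W \<and> x \<notin> W \<and> center \<inter> W = V"
proof -
  let ?T = "{\<alpha>. integral_over V \<alpha>}"
  have V: "is_subring V" "V \<subseteq> center" using maximal_subring_ofD[OF maxV] by auto
  have VT: "V \<subseteq> ?T" using integral_over_mem[OF V(1)] by blast
  have center_le: "center \<subseteq> S" if "is_subring S" "?T \<subseteq> S" "x \<in> S" for S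
    using center_subset_subring[OF maxV that(1) _ that(3) x] VT that(2) by blast
  have "x \<notin> ?T"
  proof
    assume "x \<in> ?T"
    obtain a where a: "a \<in> V" "a \<noteq> 0" "inverse a \<notin> V"
      using notfield V(1) unfolding is_subfield_def by blast
    have "inverse a \<in> ?T"
      using center_le[OF T order_refl \<open>x \<in> ?T\<close>] inverse_in_center a(1) V(2) by blast
    then show False using inverse_mem_if_integral_over[OF V a(1,2)] a(3) by blast
  qed
  moreover have "S = UNIV" if "is_subring S" "?T \<subseteq> S" "x \<in> S" for S
    using subring_eq_UNIV_if_algebraic[OF alg V fractions_eq_center[OF maxV notfield]
        that(1) center_le[OF that] that(2)] .
  ultimately obtain W where W: "maximal_subring_of W UNIV" "?T \<subseteq> W" "x \<notin> W"
    using exists_maximal_subring_avoiding[OF T] by blast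
  moreover have "center \<inter> W = V"
  proof -
    have "is_subring (center \<inter> W)"
      using W(1) is_subring_center subring_Int unfolding maximal_subring_of_def by blast
    moreover have "V \<subseteq> center \<inter> W" "center \<inter> W \<subset> center" using V VT W(2,3) x by auto
    ultimately show ?thesis using maxV unfolding maximal_subring_of_def by blast
  qed
  ultimately show ?thesis by blast
qed

end
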